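(* Let $N\ge0$ be an integer, take $\tau_1=1$, $\tau_2=-1$, $\tau_3=-2N-2-\alpha-\beta$ and $\tau_0$ arbitrary, so that $M=XL-LX+\tau_3X+\tau_0=2x(x-1)\partial_x+(\alpha+\beta+\tau_3+2)x+\tau_0-\alpha-1$. Then $L$ and $M$ preserve the space of polynomials of degree $\le N$; the polynomials $\psi_n(x)=x^n(1-x)^{N-n}$, $n=0,\dots,N$, satisfy $M\psi_n=(\tau_0-2n-\alpha-1)\psi_n$; and $$L\psi_n=(N-n)(N-n+\beta)\psi_{n+1}+\big(2n^2+(\alpha-\beta-2N)n-(\alpha+1)N\big)\psi_n+n(n+\alpha)\psi_{n-1},$$ with $\psi_{-1}:=0$, $\psi_{N+1}:=0$.
   Context: $L=x(1-x)\partial_x^2+\big(\alpha+1-(\alpha+\beta+2)x\big)\partial_x$ with real $\alpha,\beta>-1$, and $X$ is multiplication by $x$. *)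

theory Defs
  imports "HOL-Computational_Algebra.Polynomial"
begin

definition Lop :: "real \<Rightarrow> real \<Rightarrow> real poly \<Rightarrow> real poly" where
  "Lop a b p = [:0, 1, -1:] * pderiv (pderiv p) + [:a + 1, -(a + b + 2):] * pderiv p"

definition Mop :: "real \<Rightarrow> real \<Rightarrow> real \<Rightarrow> real \<Rightarrow> real \<Rightarrow> real \<Rightarrow> real poly \<Rightarrow> real poly" where
  "Mop a b t1 t2 t3 t0 p =
     smult t1 ([:0, 1:] * Lop a b p) + smult t2 (Lop a b ([:0, 1:] * p))
     + smult t3 ([:0, 1:] * p) + smult t0 p"

definition psi :: "nat \<Rightarrow> nat \<Rightarrow> real poly" where
  "psi N n = [:0, 1:] ^ n * [:1, -1:] ^ (N - n)"

end

theory Submission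
  imports Defs
begin

text \<open>Both x and 1 - x satisfy Euler-type relations for their own powers, so with
  w = x(1 - x) the polynomial \<open>\<psi>\<^sub>n = x\<^sup>n (1 - x)\<^sup>N\<^sup>-\<^sup>n\<close> satisfies
  \<open>w \<psi>\<^sub>n' = (n - N x) \<psi>\<^sub>n\<close> and \<open>w\<^sup>2 \<psi>\<^sub>n'' = (n(n-1) - 2n(N-1) x + N(N-1) x\<^sup>2) \<psi>\<^sub>n\<close>.
  Hence M acts diagonally, and \<open>w L \<psi>\<^sub>n\<close> is a quadratic polynomial times \<open>\<psi>\<^sub>n\<close>. Since
  \<open>w \<psi>\<^sub>n\<^sub>+\<^sub>1 = x\<^sup>2 \<psi>\<^sub>n\<close> and \<open>w \<psi>\<^sub>n\<^sub>-\<^sub>1 = (1 - x)\<^sup>2 \<psi>\<^sub>n\<close>, the three-term relation multiplied by w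
  is an identity between quadratics, and w cancels.\<close>

lemma linear_mult_pderiv_power:
  fixes l :: "'a::idom poly"
  assumes "pderiv l = [:d:]"
  shows "l * pderiv (l ^ n) = smult (of_nat n * d) (l ^ n)"
proof (cases n)
  case (Suc k)
  have "l * pderiv (l ^ n) = smult (of_nat n) (l * l ^ k * [:d:])"
    using Suc assms by (simp add: pderiv_power mult_ac del: power_Suc)
  also have "\<dots> = smult (of_nat n * d) (l ^ n)"
    using Suc by (simp add: mult_ac)
  finally show ?thesis .
qed simp

lemma linear_square_mult_pderiv_pderiv:
  fixes l p :: "'a::idom poly"
  assumes l: "pderiv l = [:d:]" and p: "l * pderiv p = smult c p"
  shows "l\<^sup>2 * pderiv (pderiv p) = smult (c * (c - d)) p"
proof -
  have "l * pderiv (l * pderiv p) = smult d (l * pderiv p) + l\<^sup>2 * pderiv (pderiv p)"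
    by (simp add: pderiv_mult l algebra_simps power2_eq_square)
  moreover have "l * pderiv (l * pderiv p) = smult (c * c) p"
    using p by (simp add: pderiv_smult mult.assoc)
  ultimately have "l\<^sup>2 * pderiv (pderiv p) + smult (c * d) p = smult (c * c) p"
    using p by (simp add: add.commute mult.commute)
  then show ?thesis
    by (simp add: smult_diff_left right_diff_distrib eq_diff_eq)
qed

lemma mult_pderiv_mult_of_Euler:
  fixes l m p q :: "'a::idom poly"
  assumes "l * pderiv p = smult c p" and "m * pderiv q = smult e q"
  shows "l * m * pderiv (p * q) = (smult c m + smult e l) * (p * q)"
proof -
  have "l * m * pderiv (p * q) = m * q * (l * pderiv p) + l * p * (m * pderiv q)"
    by (simp add: pderiv_mult algebra_simps)
  then show ?thesis
    using assms by (simp add: algebra_simps)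
qed

lemma square_mult_pderiv_pderiv_mult_of_Euler:
  fixes l m p q :: "'a::idom poly"
  assumes "l * pderiv p = smult c p" and "l\<^sup>2 * pderiv (pderiv p) = smult c2 p"
    and "m * pderiv q = smult e q" and "m\<^sup>2 * pderiv (pderiv q) = smult e2 q"
  shows "(l * m)\<^sup>2 * pderiv (pderiv (p * q))
           = (smult c2 (m\<^sup>2) + smult (2 * c * e) (l * m) + smult e2 (l\<^sup>2)) * (p * q)"
proof -
  have "(l * m)\<^sup>2 * pderiv (pderiv (p * q))
          = m\<^sup>2 * q * (l\<^sup>2 * pderiv (pderiv p)) + 2 * (l * m * (l * pderiv p) * (m * pderiv q))
            + l\<^sup>2 * p * (m\<^sup>2 * pderiv (pderiv q))"
    by (simp add: pderiv_mult pderiv_add algebra_simps power2_eq_square)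
  also have "\<dots> = m\<^sup>2 * q * smult c2 p + 2 * (l * m * smult c p * smult e q) + l\<^sup>2 * p * smult e2 q"
    by (simp only: assms)
  also have "\<dots> = (smult c2 (m\<^sup>2) + smult (2 * c * e) (l * m) + smult e2 (l\<^sup>2)) * (p * q)"
    unfolding numeral_mult_conv_smult by (simp add: algebra_simps)
  finally show ?thesis .
qed

lemma X_power_mult_pderiv:
  "[:0, 1:] * pderiv ([:0, 1:] ^ n) = smult (of_nat n) ([:0, 1:] ^ n :: 'a::idom poly)"
  using linear_mult_pderiv_power[of "[:0, 1:]" 1] by (simp add: pderiv_pCons)

lemma X_power_square_mult_pderiv_pderiv:
  "[:0, 1:]\<^sup>2 * pderiv (pderiv ([:0, 1:] ^ n))
     = smult (of_nat n * (of_nat n - 1)) ([:0, 1:] ^ n :: 'a::idom poly)"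
  by (rule linear_square_mult_pderiv_pderiv[OF _ X_power_mult_pderiv]) (simp add: pderiv_pCons)

lemma one_minus_X_power_mult_pderiv:
  "[:1, -1:] * pderiv ([:1, -1:] ^ n) = smult (- of_nat n) ([:1, -1:] ^ n :: 'a::idom poly)"
  using linear_mult_pderiv_power[of "[:1, -1:]" "-1"] by (simp add: pderiv_pCons)

lemma one_minus_X_power_square_mult_pderiv_pderiv:
  "[:1, -1:]\<^sup>2 * pderiv (pderiv ([:1, -1:] ^ n))
     = smult (of_nat n * (of_nat n - 1)) ([:1, -1:] ^ n :: 'a::idom poly)"
  using linear_square_mult_pderiv_pderiv[OF _ one_minus_X_power_mult_pderiv, of "-1"]
  by (simp add: pderiv_pCons algebra_simps)

lemma X_mult_one_minus_X: "[:0, 1:] * [:1, -1:] = [:0, 1, -1::'a::comm_ring_1:]"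
  by simp

lemma psi_mult_pderiv:
  assumes "n \<le> N"
  shows "[:0, 1, -1:] * pderiv (psi N n) = [:real n, - real N:] * psi N n"
proof -
  have "[:0, 1, -1:] * pderiv (psi N n)
          = (smult (real n) [:1, -1:] + smult (- real (N - n)) [:0, 1:]) * psi N n"
    unfolding psi_def X_mult_one_minus_X[symmetric]
    by (rule mult_pderiv_mult_of_Euler[OF X_power_mult_pderiv one_minus_X_power_mult_pderiv])
  also have "smult (real n) [:1, -1:] + smult (- real (N - n)) [:0, 1:] = [:real n, - real N:]"
    using assms by (simp add: of_nat_diff)
  finally show ?thesis .
qed

lemma psi_square_mult_pderiv_pderiv:
  assumes "n \<le> N"
  shows "[:0, 1, -1:]\<^sup>2 * pderiv (pderiv (psi N n))
           = [:real n * (real n - 1), - 2 * real n * (real N - 1), real N * (real N - 1):] * psi N n"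
proof -
  let ?j = "real (N - n)"
  have "[:0, 1, -1:]\<^sup>2 * pderiv (pderiv (psi N n))
          = (smult (real n * (real n - 1)) ([:1, -1:]\<^sup>2) + smult (2 * real n * - ?j) ([:0, 1:] * [:1, -1:])
             + smult (?j * (?j - 1)) ([:0, 1:]\<^sup>2)) * psi N n"
    unfolding psi_def X_mult_one_minus_X[symmetric]
    by (rule square_mult_pderiv_pderiv_mult_of_Euler[OF X_power_mult_pderiv
          X_power_square_mult_pderiv_pderiv one_minus_X_power_mult_pderiv
          one_minus_X_power_square_mult_pderiv_pderiv])
  also have "smult (real n * (real n - 1)) ([:1, -1:]\<^sup>2) + smult (2 * real n * - ?j) ([:0, 1:] * [:1, -1:])
             + smult (?j * (?j - 1)) ([:0, 1:]\<^sup>2)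
           = [:real n * (real n - 1), - 2 * real n * (real N - 1), real N * (real N - 1):]"
    using assms by (simp add: of_nat_diff power2_eq_square algebra_simps)
  finally show ?thesis .
qed

lemma psi_Suc_mult:
  assumes "n < N"
  shows "[:0, 1, -1:] * psi N (Suc n) = [:0, 0, 1:] * psi N n"
proof -
  obtain k where "N - n = Suc k"
    using assms by (metis Suc_diff_Suc)
  moreover have "N - Suc n = k"
    using calculation by simp
  ultimately show ?thesis
    unfolding psi_def X_mult_one_minus_X[symmetric] by (simp add: algebra_simps)
qed

lemma psi_pred_mult:
  assumes "0 < n" and "n \<le> N"
  shows "[:0, 1, -1:] * psi N (n - 1) = [:1, -2, 1:] * psi N n"
proof -
  obtain k where n: "n = Suc k"
    using assms by (metis gr0_implies_Suc)
  then have "N - k = Suc (N - n)"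
    using assms by simp
  then show ?thesis
    unfolding psi_def X_mult_one_minus_X[symmetric] n
    by (simp add: algebra_simps numeral_mult_conv_smult)
qed

lemma Mop_first_order:
  "Mop a b 1 (-1) t3 t0 p = [:0, -2, 2:] * pderiv p + [:t0 - a - 1, a + b + t3 + 2:] * p"
proof -
  have d1: "pderiv ([:0, 1:] * p) = p + [:0, 1:] * pderiv p"
    by (simp add: pderiv_mult pderiv_pCons)
  have d2: "pderiv (pderiv ([:0, 1:] * p)) = 2 * pderiv p + [:0, 1:] * pderiv (pderiv p)"
    unfolding d1 by (simp add: pderiv_add pderiv_mult pderiv_pCons)
  show ?thesis
    unfolding Mop_def Lop_def d2 unfolding d1
    by (rule iffD1[OF poly_eq_poly_eq_iff], rule ext) (simp add: algebra_simps)
qed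

lemma degree_Lop_le:
  assumes "degree p \<le> N"
  shows "degree (Lop a b p) \<le> N"
  using assms unfolding Lop_def
  by (intro degree_le) (auto simp: coeff_pCons coeff_pderiv coeff_eq_0 split: nat.split)

text \<open>The coefficients of \<open>x\<^sup>N\<^sup>+\<^sup>1\<close>, namely \<open>2N c\<^sub>N\<close> and \<open>-2N c\<^sub>N\<close>, cancel.\<close>
lemma degree_first_order_le:
  fixes p :: "real poly"
  assumes "degree p \<le> N"
  shows "degree ([:0, -2, 2:] * pderiv p + [:c, - 2 * real N:] * p) \<le> N"
  using assms
  by (intro degree_le) (auto simp: coeff_pCons coeff_pderiv coeff_eq_0 split: nat.split)

lemma first_order_psi:
  assumes "n \<le> N"
  shows "[:0, -2, 2:] * pderiv (psi N n) + [:c, - 2 * real N:] * psi N n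
           = smult (c - 2 * real n) (psi N n)"
proof -
  have "[:0, -2, 2:] = smult (-2) [:0, 1, -1::real:]"
    by simp
  then have "[:0, -2, 2:] * pderiv (psi N n) = smult (-2) ([:0, 1, -1:] * pderiv (psi N n))"
    by (simp only: mult_smult_left)
  also have "\<dots> = smult (-2) [:real n, - real N:] * psi N n"
    by (simp only: psi_mult_pderiv[OF assms] mult_smult_left)
  finally have "[:0, -2, 2:] * pderiv (psi N n) = smult (-2) [:real n, - real N:] * psi N n" .
  then show ?thesis
    by (simp only:) (intro iffD1[OF poly_eq_poly_eq_iff] ext, simp add: algebra_simps)
qed

lemma Lop_psi_mult:
  assumes "n \<le> N"
  shows "[:0, 1, -1:] * Lop a b (psi N n)
           = ([:real n * (real n - 1), - 2 * real n * (real N - 1), real N * (real N - 1):]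
              + [:a + 1, - (a + b + 2):] * [:real n, - real N:]) * psi N n"
proof -
  have "[:0, 1, -1:] * Lop a b (psi N n)
          = [:0, 1, -1:]\<^sup>2 * pderiv (pderiv (psi N n))
            + [:a + 1, - (a + b + 2):] * ([:0, 1, -1:] * pderiv (psi N n))"
    unfolding Lop_def by (simp only: power2_eq_square algebra_simps)
  also have "\<dots> = ([:real n * (real n - 1), - 2 * real n * (real N - 1), real N * (real N - 1):]
              + [:a + 1, - (a + b + 2):] * [:real n, - real N:]) * psi N n"
    unfolding psi_square_mult_pderiv_pderiv[OF assms] psi_mult_pderiv[OF assms]
    by (simp only: distrib_right mult.assoc)
  finally show ?thesis .
qed

lemma Lop_psi:
  assumes "n \<le> N"
  shows "Lop a b (psi N n) =
             (if n < N then smult ((real N - real n) * (real N - real n + b)) (psi N (n + 1)) else 0)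
           + smult (2 * (real n)\<^sup>2 + (a - b - 2 * real N) * real n - (a + 1) * real N) (psi N n)
           + (if 0 < n then smult (real n * (real n + a)) (psi N (n - 1)) else 0)"
    (is "_ = ?up + smult ?B (psi N n) + ?down")
proof -
  let ?A = "(real N - real n) * (real N - real n + b)" and ?C = "real n * (real n + a)"
  have up: "[:0, 1, -1:] * ?up = smult ?A ([:0, 0, 1:] * psi N n)"
  proof (cases "n < N")
    case True
    then show ?thesis
      by (simp only: if_P mult_smult_right Suc_eq_plus1[symmetric] psi_Suc_mult)
  qed (use assms in simp)
  have down: "[:0, 1, -1:] * ?down = smult ?C ([:1, -2, 1:] * psi N n)"
  proof (cases "0 < n")
    case True
    then show ?thesis
      by (simp only: if_P mult_smult_right psi_pred_mult[OF True assms])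
  qed simp
  have "[:0, 1, -1:] * (?up + smult ?B (psi N n) + ?down)
          = (smult ?A [:0, 0, 1:] + smult ?B [:0, 1, -1:] + smult ?C [:1, -2, 1:]) * psi N n"
    by (simp only: distrib_left[of "[:0, 1, -1:]"] distrib_right[where c = "psi N n"] up down
        mult_smult_left mult_smult_right)
  also have "smult ?A [:0, 0, 1:] + smult ?B [:0, 1, -1:] + smult ?C [:1, -2, 1:]
           = [:real n * (real n - 1), - 2 * real n * (real N - 1), real N * (real N - 1):]
             + [:a + 1, - (a + b + 2):] * [:real n, - real N:]"
    by (simp add: algebra_simps power2_eq_square)
  also have "\<dots> * psi N n = [:0, 1, -1:] * Lop a b (psi N n)"
    by (rule Lop_psi_mult[OF assms, symmetric])
  finally have "[:0, 1, -1:] * (?up + smult ?B (psi N n) + ?down) = [:0, 1, -1:] * Lop a b (psi N n)" .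
  moreover have "[:0, 1, -1::real:] \<noteq> 0"
    by simp
  ultimately show ?thesis
    by (metis mult_left_cancel)
qed

theorem mainTheorem9:
  fixes a b t0 :: real and N :: nat
  assumes "a > -1" and "b > -1"
  defines "t3 \<equiv> - 2 * real N - 2 - a - b"
  shows "(\<forall>p. Mop a b 1 (-1) t3 t0 p
              = [:0, -2, 2:] * pderiv p + [:t0 - a - 1, a + b + t3 + 2:] * p)
       \<and> (\<forall>p. degree p \<le> N \<longrightarrow> degree (Lop a b p) \<le> N \<and> degree (Mop a b 1 (-1) t3 t0 p) \<le> N)
       \<and> (\<forall>n\<le>N. Mop a b 1 (-1) t3 t0 (psi N n) = smult (t0 - 2 * real n - a - 1) (psi N n))
       \<and> (\<forall>n\<le>N. Lop a b (psi N n) =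
             (if n < N then smult ((real N - real n) * (real N - real n + b)) (psi N (n + 1)) else 0)
           + smult (2 * (real n)^2 + (a - b - 2 * real N) * real n - (a + 1) * real N) (psi N n)
           + (if 0 < n then smult (real n * (real n + a)) (psi N (n - 1)) else 0))"
proof -
  have M: "Mop a b 1 (-1) t3 t0 p = [:0, -2, 2:] * pderiv p + [:t0 - a - 1, - 2 * real N:] * p" for p
    unfolding Mop_first_order t3_def by simp
  show ?thesis
  proof (intro conjI allI impI)
    fix p :: "real poly"
    show "Mop a b 1 (-1) t3 t0 p = [:0, -2, 2:] * pderiv p + [:t0 - a - 1, a + b + t3 + 2:] * p"
      by (rule Mop_first_order)
    assume "degree p \<le> N"
    then show "degree (Lop a b p) \<le> N" and "degree (Mop a b 1 (-1) t3 t0 p) \<le> N"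
      unfolding M by (rule degree_Lop_le, rule degree_first_order_le)
  next
    fix n
    assume n: "n \<le> N"
    show "Mop a b 1 (-1) t3 t0 (psi N n) = smult (t0 - 2 * real n - a - 1) (psi N n)"
      unfolding M first_order_psi[OF n] by (simp add: algebra_simps)
    from n show "Lop a b (psi N n) =
             (if n < N then smult ((real N - real n) * (real N - real n + b)) (psi N (n + 1)) else 0)
           + smult (2 * (real n)^2 + (a - b - 2 * real N) * real n - (a + 1) * real N) (psi N n)
           + (if 0 < n then smult (real n * (real n + a)) (psi N (n - 1)) else 0)"
      by (rule Lop_psi)
  qed
qed

end
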